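(* Let $n\ge1$ and $\bm{N}=(N_0,\ldots,N_{n-1},-\sum_{i=0}^{n-1}N_i)$ with integers $N_i>0$. Let $s_k=\sum_{j=0}^kN_j$ (with $s_{-1}=0$) and for $1\le k\le n$ let \[ c_k=\frac{s_{n-k}}{k}-\frac{s_{n-k-1}}{k+1}=\frac{N_{n-k}}{k+1}+\frac{s_{n-k}}{k(k+1)}. \] Then the uniform average of the vertices of $\mathcal{F}_n(\bm{N})$ is the flow $\bm{f}$ with $f_{ij}=c_{n-i}$ for all $0\le i<j\le n$. (Equivalently, in the $n\times n$ matrix form the row $i$ entries $a_{ij}$ with $i+j\le n-1$ equal $c_{n-i}$, and the entry $a_{k',n-k'}$ for $1\le k'\le n-1$ in the row with label $k=n-k'$ equals $b_k=\frac{k}{k+1}s_{n-k-1}$.)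
   Context: $\mathcal{F}_n(\bm{N})$ is the polytope of $\bm{f}=(f_{ij})_{0\le i<j\le n}\in\mathbb{R}_{\ge0}^{\binom{n+1}{2}}$ with $\sum_{j>i} f_{ij}-\sum_{k<i} f_{ki}=N_i$ for every $i\in\{0,\ldots,n\}$. The uniform average of vertices is the arithmetic mean of its (finitely many) vertices. The matrix form of $\bm f$ is $(a_{ij})_{0\le i,j\le n-1}$ with $a_{ij}=f_{i,n-j}$ for $i+j\le n-1$, $a_{i,n-i}=\sum_{k<i}(N_k-f_{k,i})$ for $1\le i\le n-1$, zero otherwise. *)

theory Defs
  imports Complex_Main
begin

text \<open>A flow on the complete graph with vertices 0..n is represented as a function
  f :: nat => nat => real whose value f i j is the flow on edge (i,j), i<j<=n;
  outside these pairs f is required to be 0, so the ambient space is the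
  coordinate space indexed by {(i,j). i<j<=n}.\<close>

definition flow_polytope :: "nat \<Rightarrow> (nat \<Rightarrow> int) \<Rightarrow> (nat \<Rightarrow> nat \<Rightarrow> real) set" where
  "flow_polytope n N = {f.
     (\<forall>i j. \<not> (i < j \<and> j \<le> n) \<longrightarrow> f i j = 0) \<and>
     (\<forall>i j. i < j \<and> j \<le> n \<longrightarrow> f i j \<ge> 0) \<and>
     (\<forall>i\<le>n. (\<Sum>j\<in>{i<..n}. f i j) - (\<Sum>k<i. f k i) = real_of_int (N i))}"

definition vertices :: "(nat \<Rightarrow> nat \<Rightarrow> real) set \<Rightarrow> (nat \<Rightarrow> nat \<Rightarrow> real) set" where
  "vertices P = {f \<in> P. \<not> (\<exists>g\<in>P. \<exists>h\<in>P. g \<noteq> h \<and>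
       (\<exists>t::real. 0 < t \<and> t < 1 \<and> f = (\<lambda>i j. t * g i j + (1 - t) * h i j)))}"

definition vertex_average :: "(nat \<Rightarrow> nat \<Rightarrow> real) set \<Rightarrow> (nat \<Rightarrow> nat \<Rightarrow> real)" where
  "vertex_average P = (\<lambda>i j. (\<Sum>v\<in>vertices P. v i j) / real (card (vertices P)))"

text \<open>psum N m = N_0 + ... + N_(m-1); thus s_k = psum N (k+1) and s_(-1) = psum N 0 = 0.\<close>

definition psum :: "(nat \<Rightarrow> int) \<Rightarrow> nat \<Rightarrow> real" where
  "psum N m = real_of_int (\<Sum>j<m. N j)"

definition cval :: "nat \<Rightarrow> (nat \<Rightarrow> int) \<Rightarrow> nat \<Rightarrow> real" where
  "cval n N k = psum N (n - k + 1) / real k - psum N (n - k) / real (k + 1)"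

end

theory Submission
  imports Defs "HOL-Library.FuncSet"
begin

text \<open>For positive supplies \<open>N\<^sub>0, \<dots>, N\<^sub>n\<^sub>-\<^sub>1\<close> a vertex of \<open>\<F>\<^sub>n(N)\<close> uses exactly one
  out-edge \<open>(k, \<sigma> k)\<close> at every node \<open>k < n\<close>: if a node had two positive out-edges, one could
  shift mass between them and send the difference on to the sink along the chosen edges, in either
  direction. Conversely such a flow is forced by \<open>\<sigma>\<close> (each node passes on its supply plus its
  inflow), so the vertices correspond bijectively to the \<open>n!\<close> maps \<open>\<sigma>\<close> with
  \<open>k < \<sigma> k \<le> n\<close>. Averaging over \<open>\<sigma>\<close>: the outflow of node \<open>i\<close> depends only on \<open>\<sigma>\<close>
  below \<open>i\<close>, so it is spread evenly over the \<open>n - i\<close> choices of \<open>\<sigma> i\<close>. Hence the mean flow on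
  \<open>(i, j)\<close> is \<open>a\<^sub>i / (n - i)\<close>, where the mean outflow satisfies
  \<open>a\<^sub>i = N\<^sub>i + \<Sum>\<^bsub>k<i\<^esub> a\<^sub>k / (n - k)\<close>, and this recurrence telescopes to
  \<open>a\<^sub>i / (n - i) = c\<^sub>n\<^sub>-\<^sub>i\<close>.\<close>

definition netflow :: "nat \<Rightarrow> (nat \<Rightarrow> nat \<Rightarrow> real) \<Rightarrow> nat \<Rightarrow> real" where
  "netflow n f m = (\<Sum>l\<in>{m<..n}. f m l) - (\<Sum>k<m. f k m)"

lemma mem_flow_polytope_iff:
  "f \<in> flow_polytope n N \<longleftrightarrow>
     (\<forall>k l. \<not> (k < l \<and> l \<le> n) \<longrightarrow> f k l = 0) \<and>
     (\<forall>k l. k < l \<and> l \<le> n \<longrightarrow> f k l \<ge> 0) \<and>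
     (\<forall>m\<le>n. netflow n f m = real_of_int (N m))"
  unfolding flow_polytope_def netflow_def by simp

lemma flow_polytope_nonneg: "f \<in> flow_polytope n N \<Longrightarrow> f k l \<ge> 0"
  unfolding mem_flow_polytope_iff by (cases "k < l \<and> l \<le> n") auto

lemma flow_polytope_nonzeroD: "f \<in> flow_polytope n N \<Longrightarrow> f k l \<noteq> 0 \<Longrightarrow> k < l \<and> l \<le> n"
  unfolding mem_flow_polytope_iff by blast

lemma netflow_add: "netflow n (\<lambda>k l. f k l + g k l) m = netflow n f m + netflow n g m"
  unfolding netflow_def by (simp add: sum.distrib)

lemma netflow_diff: "netflow n (\<lambda>k l. f k l - g k l) m = netflow n f m - netflow n g m"
  unfolding netflow_def by (simp add: sum_subtractf)

lemma netflow_scale: "netflow n (\<lambda>k l. c * f k l) m = c * netflow n f m"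
  unfolding netflow_def by (simp add: sum_distrib_left right_diff_distrib)

lemma netflow_edge_indicator:
  assumes "i < j" "j \<le> n"
  shows "netflow n (\<lambda>k l. if k = i \<and> l = j then 1 else 0) m =
    (if m = i then 1 else 0) - (if m = j then 1 else 0)"
  using assms by (auto simp: netflow_def sum.delta' if_distrib cong: if_cong)

lemma sum_netflow_eq_0: "(\<Sum>m\<le>n. netflow n f m) = 0"
proof -
  have "(\<Sum>m\<le>n. \<Sum>k<m. f k m) = (\<Sum>k<n. \<Sum>m\<in>{Suc k..n}. f k m)"
    by (rule sum.nested_swap')
  also have "\<dots> = (\<Sum>k\<le>n. \<Sum>m\<in>{k<..n}. f k m)"
    by (simp add: lessThan_Suc_atMost[symmetric] atLeastSucAtMost_greaterThanAtMost)
  finally show ?thesis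
    by (simp add: netflow_def sum_subtractf)
qed

lemma netflow_last: "netflow n f n = - (\<Sum>m<n. netflow n f m)"
  using sum_netflow_eq_0[of n f] by (simp add: lessThan_Suc_atMost[symmetric])

section \<open>Vertices of the flow polytope\<close>

lemma exists_pos_scaled_le:
  fixes d p :: "'a \<Rightarrow> real"
  assumes "finite A"
    and "\<And>x. x \<in> A \<Longrightarrow> d x \<noteq> 0 \<Longrightarrow> p x > 0"
    and "\<And>x. x \<in> A \<Longrightarrow> p x \<ge> 0"
  shows "\<exists>e>0. \<forall>x\<in>A. e * \<bar>d x\<bar> \<le> p x"
proof -
  define e where "e = Min (insert 1 ((\<lambda>x. p x / \<bar>d x\<bar>) ` {x\<in>A. d x \<noteq> 0}))"
  have "e > 0"
    unfolding e_def using assms by auto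
  moreover have "e * \<bar>d x\<bar> \<le> p x" if "x \<in> A" for x
  proof (cases "d x = 0")
    case True
    then show ?thesis using assms(3) that by simp
  next
    case False
    then have "e \<le> p x / \<bar>d x\<bar>"
      unfolding e_def using assms(1) that by (intro Min_le) auto
    then show ?thesis using False by (simp add: pos_le_divide_eq)
  qed
  ultimately show ?thesis by blast
qed

lemma not_vertex_if_balanced_direction:
  assumes f: "f \<in> flow_polytope n N"
    and balanced: "\<And>m. m \<le> n \<Longrightarrow> netflow n D m = 0"
    and supp: "\<And>k l. D k l \<noteq> 0 \<Longrightarrow> f k l > 0"
    and nonzero: "D a b \<noteq> 0"
  shows "f \<notin> vertices (flow_polytope n N)"
proof -
  let ?P = "flow_polytope n N"
  have D_edge: "k < l \<and> l \<le> n" if "D k l \<noteq> 0" for k l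
    using flow_polytope_nonzeroD[OF f] supp[OF that] by (metis less_irrefl)
  obtain e where "e > 0" and e: "\<forall>x\<in>{..n} \<times> {..n}. e * \<bar>case_prod D x\<bar> \<le> case_prod f x"
    using exists_pos_scaled_le[of "{..n} \<times> {..n}" "case_prod D" "case_prod f"]
      supp flow_polytope_nonneg[OF f] by fastforce
  have perturbed: "(\<lambda>k l. f k l + c * D k l) \<in> ?P" if "\<bar>c\<bar> \<le> e" for c
  proof -
    have "0 \<le> f k l + c * D k l" for k l
    proof (cases "D k l = 0")
      case True
      then show ?thesis using flow_polytope_nonneg[OF f] by simp
    next
      case False
      have "- (c * D k l) \<le> \<bar>c\<bar> * \<bar>D k l\<bar>"
        by (metis abs_ge_minus_self abs_mult)
      also have "\<dots> \<le> e * \<bar>D k l\<bar>"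
        using that by (intro mult_right_mono) auto
      also have "\<dots> \<le> f k l"
        using e D_edge[OF False] by auto
      finally show ?thesis by linarith
    qed
    moreover have "f k l + c * D k l = 0" if "\<not> (k < l \<and> l \<le> n)" for k l
      using D_edge f that unfolding mem_flow_polytope_iff by auto
    ultimately show ?thesis
      using f balanced unfolding mem_flow_polytope_iff netflow_add netflow_scale by simp
  qed
  define g where "g = (\<lambda>k l. f k l + e * D k l)"
  define h where "h = (\<lambda>k l. f k l + (- e) * D k l)"
  have "g \<in> ?P" "h \<in> ?P"
    unfolding g_def h_def using \<open>e > 0\<close> by (intro perturbed; simp)+
  moreover have "g \<noteq> h"
  proof
    assume "g = h"
    then have "e * D a b = - e * D a b"
      unfolding g_def h_def by (metis add_left_cancel mult_minus_left)
    then show False using \<open>e > 0\<close> nonzero by simp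
  qed
  moreover have "f = (\<lambda>k l. (1/2) * g k l + (1 - 1/2) * h k l)"
    unfolding g_def h_def by (simp add: algebra_simps)
  ultimately have "\<exists>g\<in>?P. \<exists>h\<in>?P. g \<noteq> h \<and>
      (\<exists>t::real. 0 < t \<and> t < 1 \<and> f = (\<lambda>i j. t * g i j + (1 - t) * h i j))"
    by (intro bexI[of _ g] bexI[of _ h] conjI exI[of _ "1/2"]) auto
  then show ?thesis
    unfolding vertices_def by blast
qed

definition successor_maps :: "nat \<Rightarrow> (nat \<Rightarrow> nat) set" where
  "successor_maps n = (\<Pi>\<^sub>E k\<in>{..<n}. {k<..n})"

lemma successor_mapsD: "\<sigma> \<in> successor_maps n \<Longrightarrow> k < n \<Longrightarrow> k < \<sigma> k \<and> \<sigma> k \<le> n"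
  unfolding successor_maps_def using PiE_mem[of \<sigma> "{..<n}" "\<lambda>k. {k<..n}" k] by simp

lemma finite_successor_maps: "finite (successor_maps n)"
  unfolding successor_maps_def by (rule finite_PiE) auto

lemma card_successor_maps_pos: "card (successor_maps n) > 0"
  unfolding successor_maps_def by (subst card_PiE) (auto intro: prod_pos)

function tree_outflow :: "(nat \<Rightarrow> nat) \<Rightarrow> (nat \<Rightarrow> real) \<Rightarrow> nat \<Rightarrow> real" where
  "tree_outflow \<sigma> M i = M i + (\<Sum>k<i. if \<sigma> k = i then tree_outflow \<sigma> M k else 0)"
  by auto
termination by (relation "measure (\<lambda>(\<sigma>, M, i). i)") auto

declare tree_outflow.simps [simp del]

definition tree_flow :: "nat \<Rightarrow> (nat \<Rightarrow> nat) \<Rightarrow> (nat \<Rightarrow> real) \<Rightarrow> nat \<Rightarrow> nat \<Rightarrow> real" where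
  "tree_flow n \<sigma> M k l = (if k < n \<and> l = \<sigma> k then tree_outflow \<sigma> M k else 0)"

lemma tree_flow_nonzeroD: "tree_flow n \<sigma> M k l \<noteq> 0 \<Longrightarrow> k < n \<and> l = \<sigma> k"
  unfolding tree_flow_def by (auto split: if_splits)

lemma tree_outflow_cong:
  assumes "\<And>m. m < i \<Longrightarrow> \<sigma> m = \<tau> m"
  shows "tree_outflow \<sigma> M i = tree_outflow \<tau> M i"
  using assms
proof (induction i rule: less_induct)
  case (less i)
  have "(\<Sum>k<i. if \<sigma> k = i then tree_outflow \<sigma> M k else 0) =
      (\<Sum>k<i. if \<tau> k = i then tree_outflow \<tau> M k else 0)"
    using less by (intro sum.cong) auto
  then show ?case
    by (subst (1 2) tree_outflow.simps) simp
qed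

lemma tree_outflow_ge:
  assumes "\<And>k. k \<le> i \<Longrightarrow> M k \<ge> 0"
  shows "tree_outflow \<sigma> M i \<ge> M i"
  using assms
proof (induction i rule: less_induct)
  case (less i)
  have "tree_outflow \<sigma> M k \<ge> 0" if "k < i" for k
  proof -
    have "M k \<le> tree_outflow \<sigma> M k"
      by (rule less.IH[OF that]) (use less.prems that in auto)
    moreover have "M k \<ge> 0"
      using less.prems that by simp
    ultimately show ?thesis by linarith
  qed
  then have "(\<Sum>k<i. if \<sigma> k = i then tree_outflow \<sigma> M k else 0) \<ge> 0"
    by (intro sum_nonneg) auto
  then show ?case
    by (subst tree_outflow.simps) simp
qed

lemma netflow_tree_flow:
  assumes "\<sigma> \<in> successor_maps n" "m < n"
  shows "netflow n (tree_flow n \<sigma> M) m = M m"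
proof -
  have "(\<Sum>l\<in>{m<..n}. tree_flow n \<sigma> M m l) = tree_outflow \<sigma> M m"
    using successor_mapsD[OF assms] assms(2) by (simp add: tree_flow_def sum.delta')
  moreover have "(\<Sum>k<m. tree_flow n \<sigma> M k m) = (\<Sum>k<m. if \<sigma> k = m then tree_outflow \<sigma> M k else 0)"
    using assms(2) by (intro sum.cong) (auto simp: tree_flow_def)
  ultimately show ?thesis
    unfolding netflow_def by (simp add: tree_outflow.simps[of \<sigma> M m])
qed

lemma netflow_tree_flow_last:
  assumes "\<sigma> \<in> successor_maps n"
  shows "netflow n (tree_flow n \<sigma> M) n = - (\<Sum>m<n. M m)"
  using netflow_tree_flow[OF assms] by (simp add: netflow_last)

lemma tree_flow_in_flow_polytope:
  assumes nonneg: "\<And>i. i < n \<Longrightarrow> N i \<ge> 0"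
    and sink: "N n = - (\<Sum>i<n. N i)"
    and \<sigma>: "\<sigma> \<in> successor_maps n"
  shows "tree_flow n \<sigma> (\<lambda>i. real_of_int (N i)) \<in> flow_polytope n N"
  unfolding mem_flow_polytope_iff
proof (intro conjI allI impI)
  let ?F = "tree_flow n \<sigma> (\<lambda>i. real_of_int (N i))"
  fix k l
  show "?F k l = 0" if "\<not> (k < l \<and> l \<le> n)"
    using that tree_flow_nonzeroD successor_mapsD[OF \<sigma>] by blast
  show "?F k l \<ge> 0"
  proof (cases "k < n")
    case True
    then have "tree_outflow \<sigma> (\<lambda>i. real_of_int (N i)) k \<ge> real_of_int (N k)"
      using nonneg by (intro tree_outflow_ge) simp
    then show ?thesis
      using nonneg[OF True] by (simp add: tree_flow_def)
  qed (simp add: tree_flow_def)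
next
  fix m assume "m \<le> n"
  then consider "m < n" | "m = n" by linarith
  then show "netflow n (tree_flow n \<sigma> (\<lambda>i. real_of_int (N i))) m = real_of_int (N m)"
    by cases (simp_all add: netflow_tree_flow netflow_tree_flow_last \<sigma> sink)
qed

lemma netflow_supported_on_graph:
  assumes "\<sigma> \<in> successor_maps n" "k < n"
    and "\<And>i j. g i j \<noteq> 0 \<Longrightarrow> j = \<sigma> i"
  shows "netflow n g k = g k (\<sigma> k) - (\<Sum>i<k. g i k)"
proof -
  have "(\<Sum>l\<in>{k<..n}. g k l) = (\<Sum>l\<in>{k<..n}. if l = \<sigma> k then g k (\<sigma> k) else 0)"
    using assms(3) by (intro sum.cong) auto
  also have "\<dots> = g k (\<sigma> k)"
    using successor_mapsD[OF assms(1,2)] by (simp add: sum.delta')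
  finally show ?thesis
    unfolding netflow_def by simp
qed

lemma flow_eq_tree_flow:
  assumes f: "f \<in> flow_polytope n N" and \<sigma>: "\<sigma> \<in> successor_maps n"
    and supp: "\<And>k l. f k l \<noteq> 0 \<Longrightarrow> k < n \<and> l = \<sigma> k"
  shows "f = tree_flow n \<sigma> (\<lambda>i. real_of_int (N i))"
proof -
  let ?F = "tree_flow n \<sigma> (\<lambda>i. real_of_int (N i))"
  have "f k l = ?F k l" for k l
  proof (induction k arbitrary: l rule: less_induct)
    case (less k)
    show ?case
    proof (cases "k < n \<and> l = \<sigma> k")
      case True
      have "netflow n f k = real_of_int (N k)"
        using f True unfolding mem_flow_polytope_iff by simp
      moreover have "netflow n ?F k = real_of_int (N k)"
        using \<sigma> True by (simp add: netflow_tree_flow)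
      moreover have "netflow n f k = f k (\<sigma> k) - (\<Sum>i<k. f i k)"
        by (rule netflow_supported_on_graph[OF \<sigma>]) (use True supp in blast)+
      moreover have "netflow n ?F k = ?F k (\<sigma> k) - (\<Sum>i<k. ?F i k)"
        by (rule netflow_supported_on_graph[OF \<sigma>]) (use True tree_flow_nonzeroD in blast)+
      moreover have "(\<Sum>i<k. f i k) = (\<Sum>i<k. ?F i k)"
        using less.IH by simp
      ultimately show ?thesis
        using True by simp
    next
      case False
      then show ?thesis
        using supp[of k l] tree_flow_nonzeroD[of n \<sigma> "\<lambda>i. real_of_int (N i)" k l] by fastforce
    qed
  qed
  then show ?thesis by blast
qed

lemma tree_flow_in_vertices:
  assumes nonneg: "\<And>i. i < n \<Longrightarrow> N i \<ge> 0"
    and sink: "N n = - (\<Sum>i<n. N i)"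
    and \<sigma>: "\<sigma> \<in> successor_maps n"
  shows "tree_flow n \<sigma> (\<lambda>i. real_of_int (N i)) \<in> vertices (flow_polytope n N)"
proof -
  let ?P = "flow_polytope n N"
  let ?F = "tree_flow n \<sigma> (\<lambda>i. real_of_int (N i))"
  have "\<not> (\<exists>g\<in>?P. \<exists>h\<in>?P. g \<noteq> h \<and>
      (\<exists>t::real. 0 < t \<and> t < 1 \<and> ?F = (\<lambda>i j. t * g i j + (1 - t) * h i j)))"
  proof
    assume "\<exists>g\<in>?P. \<exists>h\<in>?P. g \<noteq> h \<and>
      (\<exists>t::real. 0 < t \<and> t < 1 \<and> ?F = (\<lambda>i j. t * g i j + (1 - t) * h i j))"
    then obtain g h t where g: "g \<in> ?P" and h: "h \<in> ?P" and "g \<noteq> h" "0 < t" "t < 1"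
      and comb: "?F = (\<lambda>i j. t * g i j + (1 - t) * h i j)"
      by blast
    have "?F k l \<noteq> 0" if "g k l \<noteq> 0 \<or> h k l \<noteq> 0" for k l
    proof -
      have "t * g k l \<ge> 0" "(1 - t) * h k l \<ge> 0"
        using \<open>0 < t\<close> \<open>t < 1\<close> flow_polytope_nonneg[OF g] flow_polytope_nonneg[OF h] by simp_all
      moreover have "t * g k l \<noteq> 0 \<or> (1 - t) * h k l \<noteq> 0"
        using that \<open>0 < t\<close> \<open>t < 1\<close> by simp
      ultimately show ?thesis
        unfolding comb by linarith
    qed
    then have "g = ?F" "h = ?F"
      using flow_eq_tree_flow[OF g \<sigma>] flow_eq_tree_flow[OF h \<sigma>] tree_flow_nonzeroD by blast+
    then show False
      using \<open>g \<noteq> h\<close> by simp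
  qed
  then show ?thesis
    using tree_flow_in_flow_polytope[OF nonneg sink \<sigma>] unfolding vertices_def by blast
qed

lemma exists_positive_successor_map:
  assumes f: "f \<in> flow_polytope n N" and pos: "\<And>i. i < n \<Longrightarrow> N i > 0"
  shows "\<exists>\<sigma>\<in>successor_maps n. \<forall>k<n. f k (\<sigma> k) > 0"
proof -
  have "\<exists>l\<in>{k<..n}. f k l > 0" if "k < n" for k
  proof (rule ccontr)
    assume "\<not> ?thesis"
    then have "(\<Sum>l\<in>{k<..n}. f k l) \<le> 0"
      by (intro sum_nonpos) (auto simp: not_less)
    moreover have "(\<Sum>i<k. f i k) \<ge> 0"
      using flow_polytope_nonneg[OF f] by (intro sum_nonneg)
    moreover have "netflow n f k = real_of_int (N k)"
      using f that unfolding mem_flow_polytope_iff by simp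
    ultimately show False
      using pos[OF that] unfolding netflow_def by linarith
  qed
  then obtain \<sigma> where \<sigma>: "\<forall>k\<in>{..<n}. \<sigma> k \<in> {k<..n} \<and> f k (\<sigma> k) > 0"
    by (metis lessThan_iff bchoice)
  then have "restrict \<sigma> {..<n} \<in> successor_maps n"
    unfolding successor_maps_def by auto
  with \<sigma> show ?thesis
    by (intro bexI[of _ "restrict \<sigma> {..<n}"]) auto
qed

lemma vertex_support_in_graph:
  assumes f: "f \<in> vertices (flow_polytope n N)" and \<sigma>: "\<sigma> \<in> successor_maps n"
    and \<sigma>_pos: "\<And>k. k < n \<Longrightarrow> f k (\<sigma> k) > 0"
    and "f k l \<noteq> 0"
  shows "k < n \<and> l = \<sigma> k"
proof -
  have fP: "f \<in> flow_polytope n N"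
    using f unfolding vertices_def by simp
  then have "k < l" "l \<le> n" "f k l > 0"
    using flow_polytope_nonzeroD[OF fP] flow_polytope_nonneg[OF fP] \<open>f k l \<noteq> 0\<close>
    by (auto simp: less_le)
  moreover have "l = \<sigma> k"
  proof (rule ccontr)
    assume "l \<noteq> \<sigma> k"
    \<comment> \<open>Move one unit from \<open>(k, \<sigma> k)\<close> to \<open>(k, l)\<close>; the \<open>\<sigma>\<close>-tree flow with supply \<open>+1\<close> at \<open>l\<close> and \<open>-1\<close> at \<open>\<sigma> k\<close> rebalances.\<close>
    define E where "E a b = (\<lambda>i j. if i = a \<and> j = b then 1 else (0::real))" for a b :: nat
    define M where "M m = (if m = l then 1 else 0) - (if m = \<sigma> k then 1 else (0::real))" for m
    define D where "D = (\<lambda>i j. tree_flow n \<sigma> M i j + E k l i j - E k (\<sigma> k) i j)"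
    have "k < n" using \<open>k < l\<close> \<open>l \<le> n\<close> by simp
    note \<sigma>k = successor_mapsD[OF \<sigma> \<open>k < n\<close>]
    have "netflow n D m = 0" if "m < n" for m
      using \<open>k < l\<close> \<open>l \<le> n\<close> \<sigma>k that
      unfolding D_def netflow_diff netflow_add
      by (simp add: E_def M_def netflow_tree_flow[OF \<sigma>] netflow_edge_indicator)
    then have "netflow n D m = 0" if "m \<le> n" for m
      using that netflow_last[of n D] by (cases "m = n") auto
    moreover have "f i j > 0" if "D i j \<noteq> 0" for i j
      using that tree_flow_nonzeroD[of n \<sigma> M i j] \<sigma>_pos \<open>f k l > 0\<close> \<open>k < n\<close>
      unfolding D_def E_def by (auto split: if_splits)
    moreover have "D k l \<noteq> 0"
      using \<open>l \<noteq> \<sigma> k\<close> tree_flow_nonzeroD[of n \<sigma> M k l] unfolding D_def E_def by auto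
    ultimately have "f \<notin> vertices (flow_polytope n N)"
      by (rule not_vertex_if_balanced_direction[OF fP])
    then show False using f by contradiction
  qed
  ultimately show ?thesis by simp
qed

lemma vertices_flow_polytope:
  assumes pos: "\<And>i. i < n \<Longrightarrow> N i > 0" and sink: "N n = - (\<Sum>i<n. N i)"
  shows "vertices (flow_polytope n N) =
    (\<lambda>\<sigma>. tree_flow n \<sigma> (\<lambda>i. real_of_int (N i))) ` successor_maps n"
proof
  show "(\<lambda>\<sigma>. tree_flow n \<sigma> (\<lambda>i. real_of_int (N i))) ` successor_maps n \<subseteq> vertices (flow_polytope n N)"
    using tree_flow_in_vertices[OF _ sink] pos by (auto intro: less_imp_le)
next
  show "vertices (flow_polytope n N) \<subseteq> (\<lambda>\<sigma>. tree_flow n \<sigma> (\<lambda>i. real_of_int (N i))) ` successor_maps n"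
  proof
    fix f assume f: "f \<in> vertices (flow_polytope n N)"
    then have fP: "f \<in> flow_polytope n N"
      unfolding vertices_def by simp
    obtain \<sigma> where \<sigma>: "\<sigma> \<in> successor_maps n" and "\<forall>k<n. f k (\<sigma> k) > 0"
      using exists_positive_successor_map[OF fP pos] by blast
    then have "f = tree_flow n \<sigma> (\<lambda>i. real_of_int (N i))"
      using flow_eq_tree_flow[OF fP \<sigma>] vertex_support_in_graph[OF f \<sigma>] by blast
    with \<sigma> show "f \<in> (\<lambda>\<sigma>. tree_flow n \<sigma> (\<lambda>i. real_of_int (N i))) ` successor_maps n"
      by blast
  qed
qed

lemma inj_on_tree_flow:
  assumes pos: "\<And>i. i < n \<Longrightarrow> M i > 0"
  shows "inj_on (\<lambda>\<sigma>. tree_flow n \<sigma> M) (successor_maps n)"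
proof (rule inj_onI)
  fix \<sigma> \<tau> assume \<sigma>: "\<sigma> \<in> successor_maps n" and \<tau>: "\<tau> \<in> successor_maps n"
    and eq: "tree_flow n \<sigma> M = tree_flow n \<tau> M"
  show "\<sigma> = \<tau>"
  proof (rule PiE_ext[OF \<sigma>[unfolded successor_maps_def] \<tau>[unfolded successor_maps_def]])
    fix k assume "k \<in> {..<n}"
    then have "M k > 0"
      using pos by simp
    moreover have "tree_outflow \<sigma> M k \<ge> M k"
      using \<open>k \<in> {..<n}\<close> pos by (intro tree_outflow_ge less_imp_le) auto
    ultimately have "tree_flow n \<tau> M k (\<sigma> k) \<noteq> 0"
      using \<open>k \<in> {..<n}\<close> eq[symmetric] by (simp add: tree_flow_def)
    then show "\<sigma> k = \<tau> k"
      using tree_flow_nonzeroD by metis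
  qed
qed

section \<open>Averaging over successor maps\<close>

lemma sum_PiE_fiber:
  fixes G :: "('a \<Rightarrow> 'b) \<Rightarrow> 'c :: comm_semiring_1"
  assumes I: "finite I" "\<And>i. i \<in> I \<Longrightarrow> finite (A i)" and "k \<in> I" "j \<in> A k"
    and invariant: "\<And>\<sigma> x. \<sigma> \<in> Pi\<^sub>E I A \<Longrightarrow> x \<in> A k \<Longrightarrow> G (\<sigma>(k := x)) = G \<sigma>"
  shows "of_nat (card (A k)) * (\<Sum>\<sigma>\<in>Pi\<^sub>E I A. if \<sigma> k = j then G \<sigma> else 0) = (\<Sum>\<sigma>\<in>Pi\<^sub>E I A. G \<sigma>)"
proof -
  define fiber where "fiber x = {\<sigma> \<in> Pi\<^sub>E I A. \<sigma> k = x}" for x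
  have upd: "\<sigma>(k := x) \<in> Pi\<^sub>E I A" if "\<sigma> \<in> Pi\<^sub>E I A" "x \<in> A k" for \<sigma> x
    using PiE_fun_upd[OF that(2,1)] insert_absorb[OF \<open>k \<in> I\<close>] by simp
  have fin: "finite (Pi\<^sub>E I A)"
    using I by (rule finite_PiE)
  have "sum G (fiber x) = sum G (fiber j)" if "x \<in> A k" for x
  proof (rule sum.reindex_bij_witness[of _ "\<lambda>\<sigma>. \<sigma>(k := x)" "\<lambda>\<sigma>. \<sigma>(k := j)"])
    show "\<sigma>(k := j) \<in> fiber j" if "\<sigma> \<in> fiber x" for \<sigma>
      using that upd \<open>j \<in> A k\<close> by (simp add: fiber_def)
    show "\<sigma>(k := x) \<in> fiber x" if "\<sigma> \<in> fiber j" for \<sigma>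
      using that upd \<open>x \<in> A k\<close> by (simp add: fiber_def)
    show "G (\<sigma>(k := j)) = G \<sigma>" if "\<sigma> \<in> fiber x" for \<sigma>
      using that invariant \<open>j \<in> A k\<close> by (simp add: fiber_def)
  qed (auto simp: fiber_def)
  note fiber_eq = this
  have "(\<lambda>\<sigma>. \<sigma> k) ` Pi\<^sub>E I A \<subseteq> A k"
    using \<open>k \<in> I\<close> by (auto simp: PiE_mem)
  then have "(\<Sum>\<sigma>\<in>Pi\<^sub>E I A. G \<sigma>) = (\<Sum>x\<in>A k. sum G (fiber x))"
    unfolding fiber_def by (rule sum.group[symmetric, OF fin I(2)[OF \<open>k \<in> I\<close>]])
  also have "\<dots> = of_nat (card (A k)) * sum G (fiber j)"
    using fiber_eq by simp
  also have "sum G (fiber j) = (\<Sum>\<sigma>\<in>Pi\<^sub>E I A. if \<sigma> k = j then G \<sigma> else 0)"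
    unfolding fiber_def using fin by (rule sum.inter_filter)
  finally show ?thesis ..
qed

lemma sum_successor_maps_fiber:
  assumes "k < j" "j \<le> n"
  shows "(\<Sum>\<sigma>\<in>successor_maps n. if \<sigma> k = j then tree_outflow \<sigma> M k else 0) =
    (\<Sum>\<sigma>\<in>successor_maps n. tree_outflow \<sigma> M k) / real (n - k)"
proof -
  have "real (card {k<..n}) * (\<Sum>\<sigma>\<in>successor_maps n. if \<sigma> k = j then tree_outflow \<sigma> M k else 0) =
      (\<Sum>\<sigma>\<in>successor_maps n. tree_outflow \<sigma> M k)"
    unfolding successor_maps_def
  proof (rule sum_PiE_fiber)
    show "tree_outflow (\<sigma>(k := x)) M k = tree_outflow \<sigma> M k" for \<sigma> x
      by (rule tree_outflow_cong) simp
  qed (use assms in auto)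
  moreover have "real (n - k) > 0"
    using assms by simp
  ultimately show ?thesis
    by (simp add: eq_divide_eq mult.commute)
qed

definition mean_tree_outflow :: "nat \<Rightarrow> (nat \<Rightarrow> real) \<Rightarrow> nat \<Rightarrow> real" where
  "mean_tree_outflow n M k =
    (\<Sum>\<sigma>\<in>successor_maps n. tree_outflow \<sigma> M k) / real (card (successor_maps n))"

lemma mean_tree_flow:
  assumes "k < j" "j \<le> n"
  shows "(\<Sum>\<sigma>\<in>successor_maps n. tree_flow n \<sigma> M k j) / real (card (successor_maps n)) =
    mean_tree_outflow n M k / real (n - k)"
proof -
  have "(\<Sum>\<sigma>\<in>successor_maps n. tree_flow n \<sigma> M k j) =
      (\<Sum>\<sigma>\<in>successor_maps n. if \<sigma> k = j then tree_outflow \<sigma> M k else 0)"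
    using assms by (intro sum.cong) (auto simp: tree_flow_def)
  then show ?thesis
    by (simp add: sum_successor_maps_fiber[OF assms] mean_tree_outflow_def divide_divide_eq_left mult.commute)
qed

lemma mean_tree_outflow_rec:
  assumes "i < n"
  shows "mean_tree_outflow n M i = M i + (\<Sum>k<i. mean_tree_outflow n M k / real (n - k))"
proof -
  let ?S = "successor_maps n"
  have "(\<Sum>\<sigma>\<in>?S. tree_outflow \<sigma> M i) =
      (\<Sum>\<sigma>\<in>?S. M i + (\<Sum>k<i. if \<sigma> k = i then tree_outflow \<sigma> M k else 0))"
    by (subst tree_outflow.simps) simp
  also have "\<dots> = real (card ?S) * M i + (\<Sum>k<i. \<Sum>\<sigma>\<in>?S. if \<sigma> k = i then tree_outflow \<sigma> M k else 0)"
    by (simp add: sum.distrib sum.swap[of _ ?S])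
  also have "\<dots> = real (card ?S) * M i + (\<Sum>k<i. (\<Sum>\<sigma>\<in>?S. tree_outflow \<sigma> M k) / real (n - k))"
    using assms by (simp add: sum_successor_maps_fiber)
  finally have "(\<Sum>\<sigma>\<in>?S. tree_outflow \<sigma> M i) / real (card ?S) =
      M i + (\<Sum>k<i. (\<Sum>\<sigma>\<in>?S. tree_outflow \<sigma> M k) / real (n - k)) / real (card ?S)"
    using card_successor_maps_pos[of n] by (simp add: add_divide_distrib)
  then show ?thesis
    unfolding mean_tree_outflow_def sum_divide_distrib by (simp add: divide_divide_eq_left mult.commute)
qed

lemma cval_telescoping:
  assumes "k < n"
  shows "cval n N (n - k) = psum N (Suc k) / real (n - Suc k + 1) - psum N k / real (n - k + 1)"
  using assms by (simp add: cval_def Suc_diff_Suc)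

lemma recurrence_solution:
  assumes rec: "\<And>i. i < n \<Longrightarrow> a i = real_of_int (N i) + (\<Sum>k<i. a k / real (n - k))"
    and "i < n"
  shows "a i / real (n - i) = cval n N (n - i)"
proof -
  define \<phi> where "\<phi> k = psum N k / real (n - k + 1)" for k
  have "a i / real (n - i) = \<phi> (Suc i) - \<phi> i"
    using \<open>i < n\<close>
  proof (induction i rule: less_induct)
    case (less i)
    have "(\<Sum>k<i. a k / real (n - k)) = (\<Sum>k<i. \<phi> (Suc k) - \<phi> k)"
      using less by simp
    also have "\<dots> = \<phi> i - \<phi> 0"
      by (rule sum_lessThan_telescope)
    also have "\<phi> 0 = 0"
      by (simp add: \<phi>_def psum_def)
    finally have a: "a i = real_of_int (N i) + \<phi> i"
      using rec[OF less.prems] by simp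
    define d where "d = real (n - i)"
    have "d > 0"
      using less.prems by (simp add: d_def)
    have "\<phi> i = psum N i / (d + 1)"
      by (simp add: \<phi>_def d_def)
    moreover have "\<phi> (Suc i) = (psum N i + real_of_int (N i)) / d"
      using less.prems by (simp add: \<phi>_def d_def psum_def Suc_diff_Suc)
    ultimately show ?case
      unfolding a d_def[symmetric] using \<open>d > 0\<close> by (simp add: field_simps)
  qed
  then show ?thesis
    using cval_telescoping[OF \<open>i < n\<close>] unfolding \<phi>_def by simp
qed

theorem proposition4p1:
  fixes n :: nat and N :: "nat \<Rightarrow> int"
  assumes "n \<ge> 1"
    and "\<forall>i<n. N i > 0"
    and "N n = - (\<Sum>i<n. N i)"
  shows "finite (vertices (flow_polytope n N)) \<and>
         vertex_average (flow_polytope n N) =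
           (\<lambda>i j. if i < j \<and> j \<le> n then cval n N (n - i) else 0)"
proof -
  let ?M = "\<lambda>i. real_of_int (N i)"
  let ?P = "flow_polytope n N"
  let ?V = "vertices ?P"
  have V: "?V = (\<lambda>\<sigma>. tree_flow n \<sigma> ?M) ` successor_maps n"
    using vertices_flow_polytope assms(2,3) by blast
  have inj: "inj_on (\<lambda>\<sigma>. tree_flow n \<sigma> ?M) (successor_maps n)"
    using inj_on_tree_flow assms(2) by simp
  have "vertex_average ?P i j = (if i < j \<and> j \<le> n then cval n N (n - i) else 0)" for i j
  proof (cases "i < j \<and> j \<le> n")
    case True
    have "vertex_average ?P i j =
        (\<Sum>\<sigma>\<in>successor_maps n. tree_flow n \<sigma> ?M i j) / real (card (successor_maps n))"
      unfolding vertex_average_def V by (simp add: sum.reindex[OF inj] card_image[OF inj])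
    also have "\<dots> = mean_tree_outflow n ?M i / real (n - i)"
      using True by (intro mean_tree_flow) auto
    also have "\<dots> = cval n N (n - i)"
      using True by (intro recurrence_solution mean_tree_outflow_rec) auto
    finally show ?thesis
      using True by simp
  next
    case False
    then have "v i j = 0" if "v \<in> ?V" for v
      using that flow_polytope_nonzeroD unfolding vertices_def by blast
    then show ?thesis
      using False by (auto simp: vertex_average_def sum.neutral)
  qed
  then show ?thesis
    using V finite_successor_maps by auto
qed

end
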